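(* Let $\mathscr{W}$ be a fenestration of $\mathbb{N}$ with partition function $\Lambda$, and let $A,B\subseteq\mathbb{N}$ be isobaric under $\mathscr{W}$. Then $m(A)=m(B)$.
   Context: $\mathbb{N}=\{1,2,3,\dots\}$, $\mathbb{N}_0=\mathbb{N}\cup\{0\}$. $\mathbf{No}$ denotes Conway's ordered field of surreal numbers, $\omega=\{0,1,2,\dots\mid\ \}$ its first infinite element. An omnific integer is a surreal $x$ with $x=\{x-1\mid x+1\}$; $\mathbf{Nn}$ (surnatural numbers) is the class of nonnegative omnific integers, $\mathbb{N}_0\subset\mathbf{Nn}$. For $A\subseteq\mathbb{N}$, $\kappa_A(n)=|A\cap\{1,\dots,n\}|$. For $f,g:\mathbb{N}\to\mathbb{N}_0$, $f\overset{\to}{=}g$ means $f(n)=g(n)$ for all $n\ge N$ for some $N$; $f\overset{\to}{<}g$ means $f(n)<g(n)$ for all $n\ge N$ for some $N$. Axiom of Extension (standing assumption): every nondecreasing $f:\mathbb{N}\to\mathbb{N}_0$ has an extension $\hat f:\mathbf{Nn}\to\mathbf{Nn}$ with $\hat f(n)=f(n)$ for $n\in\mathbb{N}$ (constant sequences extend to the same constants, the identity extends to the identity), such that for nondecreasing $f,g$: $f\overset{\to}{=}g\Rightarrow\hat f(\nu)=\hat g(\nu)$ for all $\nu\in\mathbf{Nn}\setminus\mathbb{N}$; $f\overset{\to}{<}g\Rightarrow\hat f(\nu)<\hat g(\nu)$ for all $\nu\in\mathbf{Nn}\setminus\mathbb{N}$; and $\widehat{f+g}=\hat f+\hat g$,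 $\widehat{f\cdot g}=\hat f\cdot\hat g$, $\widehat{f\circ g}=\hat f\circ\hat g$ where defined. The magnum of $A\subseteq\mathbb{N}$ is $m(A):=\hat{\kappa_A}(\omega)$. The extension of a set $S=\{f(n):n\in\mathbb{N}\}$ is $\hat S=\{\hat f(\nu):\nu\in\mathbf{Nn}\}$; $S$ is an omega set if $\omega\in\hat S$. A fenestration of $\mathbb{N}$ is given by a strictly increasing partition function $\Lambda:\mathbb{N}\to\mathbb{N}$ (with $\Lambda(0):=0$) and windows $W_n=\{\Lambda(n-1)+1,\dots,\Lambda(n)\}$, $\mathbb{N}=\biguplus_nW_n$, such that the endpoint set $\Lambda(\mathbb{N})$ is an omega set, i.e. $\omega=\hat\Lambda(\nu)$ for some $\nu\in\mathbf{Nn}$. Sets $A,B\subseteq\mathbb{N}$ are isobaric under this fenestration if $|A\cap W_n|=|B\cap W_n|$ for all $n\in\mathbb{N}$. *)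

theory Defs
  imports Main
begin

text \<open>We model the ambient
ordered field No abstractly by a type of class linordered_field, the class Nn of
surnatural numbers by a subset N of it, the first infinite surreal by an element w,
and the extension operator of the Axiom of Extension by ext.
Functions N -> N_0 on the positive integers are represented by nat => nat; the value
at 0 is irrelevant.\<close>

definition nondecr :: "(nat \<Rightarrow> nat) \<Rightarrow> bool" where
  "nondecr f \<longleftrightarrow> (\<forall>m n. 1 \<le> m \<longrightarrow> m \<le> n \<longrightarrow> f m \<le> f n)"

definition ev_eq :: "(nat \<Rightarrow> nat) \<Rightarrow> (nat \<Rightarrow> nat) \<Rightarrow> bool" where
  "ev_eq f g \<longleftrightarrow> (\<exists>M. \<forall>n\<ge>M. f n = g n)"

definition ev_less :: "(nat \<Rightarrow> nat) \<Rightarrow> (nat \<Rightarrow> nat) \<Rightarrow> bool" where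
  "ev_less f g \<longleftrightarrow> (\<exists>M. \<forall>n\<ge>M. f n < g n)"

definition infinite_sn :: "'a::linordered_field set \<Rightarrow> 'a \<Rightarrow> bool" where
  "infinite_sn N \<nu> \<longleftrightarrow> \<nu> \<in> N \<and> (\<forall>n::nat. of_nat n < \<nu>)"

definition extension_axiom ::
  "'a::linordered_field set \<Rightarrow> 'a \<Rightarrow> ((nat \<Rightarrow> nat) \<Rightarrow> 'a \<Rightarrow> 'a) \<Rightarrow> bool" where
  "extension_axiom N w ext \<longleftrightarrow>
     (\<forall>x\<in>N. 0 \<le> x) \<and> (\<forall>n::nat. of_nat n \<in> N) \<and>
     (\<forall>x\<in>N. \<forall>y\<in>N. x + y \<in> N \<and> x * y \<in> N) \<and>
     infinite_sn N w \<and>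
     (\<forall>f. nondecr f \<longrightarrow> (\<forall>\<nu>\<in>N. ext f \<nu> \<in> N)) \<and>
     (\<forall>f n. nondecr f \<longrightarrow> 1 \<le> n \<longrightarrow> ext f (of_nat n) = of_nat (f n)) \<and>
     (\<forall>c. \<forall>\<nu>\<in>N. ext (\<lambda>_. c) \<nu> = of_nat c) \<and>
     (\<forall>\<nu>\<in>N. ext id \<nu> = \<nu>) \<and>
     (\<forall>f g. nondecr f \<longrightarrow> nondecr g \<longrightarrow> ev_eq f g \<longrightarrow>
        (\<forall>\<nu>. infinite_sn N \<nu> \<longrightarrow> ext f \<nu> = ext g \<nu>)) \<and>
     (\<forall>f g. nondecr f \<longrightarrow> nondecr g \<longrightarrow> ev_less f g \<longrightarrow>
        (\<forall>\<nu>. infinite_sn N \<nu> \<longrightarrow> ext f \<nu> < ext g \<nu>)) \<and>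
     (\<forall>f g. nondecr f \<longrightarrow> nondecr g \<longrightarrow>
        (\<forall>\<nu>\<in>N. ext (\<lambda>n. f n + g n) \<nu> = ext f \<nu> + ext g \<nu>)) \<and>
     (\<forall>f g. nondecr f \<longrightarrow> nondecr g \<longrightarrow>
        (\<forall>\<nu>\<in>N. ext (\<lambda>n. f n * g n) \<nu> = ext f \<nu> * ext g \<nu>)) \<and>
     (\<forall>f g. nondecr f \<longrightarrow> nondecr g \<longrightarrow> (\<forall>n\<ge>1. 1 \<le> g n) \<longrightarrow>
        (\<forall>\<nu>\<in>N. ext (f \<circ> g) \<nu> = ext f (ext g \<nu>)))"

definition kappa :: "nat set \<Rightarrow> nat \<Rightarrow> nat" where
  "kappa A n = card (A \<inter> {1..n})"

definition magnum :: "((nat \<Rightarrow> nat) \<Rightarrow> 'a \<Rightarrow> 'a) \<Rightarrow> 'a \<Rightarrow> nat set \<Rightarrow> 'a" where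
  "magnum ext w A = ext (kappa A) w"

definition omega_set ::
  "'a::linordered_field set \<Rightarrow> 'a \<Rightarrow> ((nat \<Rightarrow> nat) \<Rightarrow> 'a \<Rightarrow> 'a) \<Rightarrow> (nat \<Rightarrow> nat) \<Rightarrow> bool" where
  "omega_set N w ext f \<longleftrightarrow> (\<exists>\<nu>\<in>N. ext f \<nu> = w)"

definition fenestration ::
  "'a::linordered_field set \<Rightarrow> 'a \<Rightarrow> ((nat \<Rightarrow> nat) \<Rightarrow> 'a \<Rightarrow> 'a) \<Rightarrow> (nat \<Rightarrow> nat) \<Rightarrow> bool" where
  "fenestration N w ext \<Lambda> \<longleftrightarrow> \<Lambda> 0 = 0 \<and> strict_mono \<Lambda> \<and> omega_set N w ext \<Lambda>"

definition window :: "(nat \<Rightarrow> nat) \<Rightarrow> nat \<Rightarrow> nat set" where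
  "window \<Lambda> n = {\<Lambda> (n - 1) + 1 .. \<Lambda> n}"

definition isobaric :: "(nat \<Rightarrow> nat) \<Rightarrow> nat set \<Rightarrow> nat set \<Rightarrow> bool" where
  "isobaric \<Lambda> A B \<longleftrightarrow> (\<forall>n\<ge>1. card (A \<inter> window \<Lambda> n) = card (B \<inter> window \<Lambda> n))"

end

theory Submission
  imports Defs
begin

text \<open>Since the endpoint set of the fenestration is an omega set, \<open>w = ext \<Lambda> \<nu>\<close> for some
surnatural \<open>\<nu>\<close>, and the composition law of the Axiom of Extension turns the magnum of \<open>A\<close>
into \<open>ext (kappa A \<circ> \<Lambda>) \<nu>\<close>. Counting \<open>A\<close> up to \<open>\<Lambda> n\<close> adds up its counts in the first \<open>n\<close>
windows, so isobaric sets have the same sequence \<open>kappa \<circ> \<Lambda>\<close> and hence the same magnum.\<close>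

lemma kappa_mono_step_window:
  assumes "L n \<le> L (Suc n)"
  shows "kappa A (L (Suc n)) = kappa A (L n) + card (A \<inter> window L (Suc n))"
proof -
  have "A \<inter> {1..L (Suc n)} = (A \<inter> {1..L n}) \<union> (A \<inter> window L (Suc n))"
    using assms by (auto simp: window_def)
  moreover have "(A \<inter> {1..L n}) \<inter> (A \<inter> window L (Suc n)) = {}"
    by (auto simp: window_def)
  ultimately show ?thesis
    unfolding kappa_def by (simp add: card_Un_disjoint window_def)
qed

lemma isobaric_kappa_comp_eq:
  assumes "mono L" "L 0 = 0" "isobaric L A B"
  shows "kappa A \<circ> L = kappa B \<circ> L"
proof
  fix n
  show "(kappa A \<circ> L) n = (kappa B \<circ> L) n"
  proof (induction n)
    case 0
    then show ?case using assms(2) by (simp add: kappa_def)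
  next
    case (Suc n)
    have step: "L n \<le> L (Suc n)" using assms(1) by (simp add: monoD)
    have "card (A \<inter> window L (Suc n)) = card (B \<inter> window L (Suc n))"
      using assms(3) unfolding isobaric_def by auto
    with Suc show ?case
      by (simp add: kappa_mono_step_window[OF step])
  qed
qed

lemma nondecr_kappa: "nondecr (kappa A)"
  unfolding nondecr_def kappa_def by (auto intro!: card_mono)

lemma mono_imp_nondecr: "mono f \<Longrightarrow> nondecr f"
  unfolding nondecr_def by (simp add: monoD)

lemma extension_axiom_comp:
  assumes "extension_axiom N w ext" "nondecr f" "nondecr g" "\<forall>n\<ge>1. 1 \<le> g n" "\<nu> \<in> N"
  shows "ext (f \<circ> g) \<nu> = ext f (ext g \<nu>)"
  using assms unfolding extension_axiom_def by blast

lemma magnum_eq_if_kappa_comp_eq: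
  assumes "extension_axiom N w ext" "omega_set N w ext L"
    and "mono L" "\<forall>n\<ge>1. 1 \<le> L n"
    and "kappa A \<circ> L = kappa B \<circ> L"
  shows "magnum ext w A = magnum ext w B"
proof -
  obtain \<nu> where \<nu>: "\<nu> \<in> N" "ext L \<nu> = w"
    using assms(2) by (auto simp: omega_set_def)
  have "\<And>C. magnum ext w C = ext (kappa C \<circ> L) \<nu>"
    using extension_axiom_comp[OF assms(1) nondecr_kappa mono_imp_nondecr[OF assms(3)] assms(4) \<nu>(1)]
    by (simp add: magnum_def \<nu>(2))
  then show ?thesis using assms(5) by simp
qed

theorem theorem6p9:
  fixes N :: "'a::linordered_field set" and w :: 'a
    and ext :: "(nat \<Rightarrow> nat) \<Rightarrow> 'a \<Rightarrow> 'a"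
    and \<Lambda> :: "nat \<Rightarrow> nat" and A B :: "nat set"
  assumes "extension_axiom N w ext"
    and "fenestration N w ext \<Lambda>"
    and "A \<subseteq> {1..}" and "B \<subseteq> {1..}"
    and "isobaric \<Lambda> A B"
  shows "magnum ext w A = magnum ext w B"
proof -
  have sm: "strict_mono \<Lambda>" and zero: "\<Lambda> 0 = 0" and om: "omega_set N w ext \<Lambda>"
    using assms(2) by (auto simp: fenestration_def)
  have mono: "mono \<Lambda>" using sm by (rule strict_mono_mono)
  have pos: "\<forall>n\<ge>1. 1 \<le> \<Lambda> n"
    using sm zero by (metis One_nat_def Suc_le_eq le_less_trans less_one strict_mono_less)
  show ?thesis
    using magnum_eq_if_kappa_comp_eq[OF assms(1) om mono pos
        isobaric_kappa_comp_eq[OF mono zero assms(5)]] .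
qed

end
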